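(* Let $I=(x_1,\ldots,x_n)$ be any list of items with sizes $x_i\in(1/3,1]$. Then $$\mathbb{E}[\mathrm{BF}(I^\sigma)] \le \frac{21}{16}\,\mathrm{OPT}(I),$$ where $\sigma$ is drawn uniformly at random from the set $\mathcal{S}_n$ of permutations of $[n]$.
   Context: Bin packing: given a list $I=(x_1,\ldots,x_n)$ of items with sizes in $(0,1]$, a packing assigns items to unit-capacity bins so that the total size of items in each bin is at most $1$. $\mathrm{OPT}(I)$ denotes the minimum number of bins in a feasible packing. The online algorithm Best Fit (BF) processes the items in the given order and packs the current item into the fullest bin (largest current load) into which it fits, opening a new bin if it fits into no existing bin; items are never moved. $\mathrm{BF}(I)$ denotes the number of bins Best Fit uses on list $I$. For $\sigma\in\mathcal{S}_n$, $I^\sigma=(x_{\sigma(1)},\ldots,x_{\sigma(n)})$. *)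

theory Defs
  imports Complex_Main "HOL-Combinatorics.Permutations"
begin

definition feasible_packing :: "real list \<Rightarrow> nat \<Rightarrow> (nat \<Rightarrow> nat) \<Rightarrow> bool" where
  "feasible_packing xs k f \<longleftrightarrow>
     (\<forall>i<length xs. f i < k) \<and>
     (\<forall>b<k. (\<Sum>i\<in>{i. i < length xs \<and> f i = b}. xs ! i) \<le> 1)"

definition OPT :: "real list \<Rightarrow> nat" where
  "OPT xs = (LEAST k. \<exists>f. feasible_packing xs k f)"

(* Best Fit on a state given as the list of current bin loads (in order of opening). *)
definition bf_step :: "real list \<Rightarrow> real \<Rightarrow> real list" where
  "bf_step loads x =
     (let fits = {j. j < length loads \<and> loads ! j + x \<le> 1} in
      if fits = {} then loads @ [x]
      else (let m = Max ((\<lambda>j. loads ! j) ` fits);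
                j0 = (LEAST j. j \<in> fits \<and> loads ! j = m)
            in loads[j0 := loads ! j0 + x]))"

definition BF :: "real list \<Rightarrow> nat" where
  "BF xs = length (foldl bf_step [] xs)"

(* I^\<sigma> = (x_{\<sigma>(1)}, ..., x_{\<sigma>(n)}), with 0-based indices *)
definition permute_list_by :: "(nat \<Rightarrow> nat) \<Rightarrow> real list \<Rightarrow> real list" where
  "permute_list_by \<sigma> xs = map (\<lambda>i. xs ! \<sigma> i) [0..<length xs]"

definition expected_BF_random_order :: "real list \<Rightarrow> real" where
  "expected_BF_random_order xs =
     (\<Sum>\<sigma>\<in>{\<sigma>. \<sigma> permutes {0..<length xs}}. real (BF (permute_list_by \<sigma> xs)))
       / real (card {\<sigma>. \<sigma> permutes {0..<length xs}})"

end

theory Submission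
  imports Defs
begin

text \<open>Call an item large if its size exceeds 1/2 and small otherwise. Since all sizes exceed
  1/3, every bin holds at most two items and at most one large item, so a Best Fit packing
  with b bins, of which l hold a large and a small item (LS bins), satisfies
  2 b + l = 2 n_L + n_S + s, where s \<le> 1 counts the bins holding a single small item.
  Pairing large and small items that share a bin of an optimal packing gives a matching M
  with 2 n_L + n_S \<le> 2 OPT + |M|. The key deterministic fact is that Best Fit creates at
  least as many LS bins as there are pairs of M whose large item arrives first. In random
  order each pair is in order with probability 1/2, and comparing an order with the one in
  which the two items of a fixed pair are swapped recovers the additive 1. Hence
  E[BF] \<le> OPT + (|M| + 1)/4, which is at most 21/16 OPT unless OPT = |M| \<le> 3; these
  small cases are settled by counting permutations directly.\<close>

section \<open>Best Fit on bins of item indices\<close>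

definition bin_load :: "real list \<Rightarrow> nat list \<Rightarrow> real" where
  "bin_load xs B = (\<Sum>i\<leftarrow>B. xs ! i)"

lemma bin_load_simps [simp]:
  "bin_load xs [] = 0"
  "bin_load xs (u # B) = xs ! u + bin_load xs B"
  by (simp_all add: bin_load_def)

definition best_fit_index :: "real list \<Rightarrow> real \<Rightarrow> nat option" where
  "best_fit_index loads x =
     (let fits = {j. j < length loads \<and> loads ! j + x \<le> 1} in
      if fits = {} then None
      else Some (LEAST j. j \<in> fits \<and> loads ! j = Max ((\<lambda>j. loads ! j) ` fits)))"

lemma bf_step_best_fit_index:
  "bf_step loads x = (case best_fit_index loads x of
     None \<Rightarrow> loads @ [x] | Some j \<Rightarrow> loads[j := loads ! j + x])"
proof (cases "{j. j < length loads \<and> loads ! j + x \<le> 1} = {}")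
  case True
  then show ?thesis
    unfolding bf_step_def best_fit_index_def Let_def by (simp only: if_P option.case)
next
  case False
  then show ?thesis
    unfolding bf_step_def best_fit_index_def Let_def by (simp only: if_not_P if_False option.case)
qed

lemma best_fit_index_None:
  "best_fit_index loads x = None \<Longrightarrow> \<forall>j<length loads. loads ! j + x > 1"
  by (auto simp: best_fit_index_def Let_def not_le split: if_splits)

lemma best_fit_index_Some:
  assumes "best_fit_index loads x = Some j"
  shows "j < length loads" "loads ! j + x \<le> 1"
    and "\<And>j'. j' < length loads \<Longrightarrow> loads ! j' + x \<le> 1 \<Longrightarrow> loads ! j' \<le> loads ! j"
proof -
  define F where "F = {j. j < length loads \<and> loads ! j + x \<le> 1}"
  define m where "m = Max ((\<lambda>j. loads ! j) ` F)"
  have F: "F \<noteq> {}" "j = (LEAST j. j \<in> F \<and> loads ! j = m)"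
    using assms by (auto simp: best_fit_index_def F_def m_def Let_def split: if_splits)
  have "finite F" by (simp add: F_def)
  then have "m \<in> (\<lambda>j. loads ! j) ` F" unfolding m_def using F(1) by (intro Max_in) auto
  then obtain j' where "j' \<in> F \<and> loads ! j' = m" by blast
  then have "j \<in> F \<and> loads ! j = m" unfolding F(2) by (rule LeastI)
  then show "j < length loads" "loads ! j + x \<le> 1"
    and "\<And>j'. j' < length loads \<Longrightarrow> loads ! j' + x \<le> 1 \<Longrightarrow> loads ! j' \<le> loads ! j"
    using \<open>finite F\<close> by (auto simp: F_def m_def)
qed

definition bf_insert :: "real list \<Rightarrow> nat list list \<Rightarrow> nat \<Rightarrow> nat list list" where
  "bf_insert xs bins i = (case best_fit_index (map (bin_load xs) bins) (xs ! i) of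
     None \<Rightarrow> bins @ [[i]] | Some j \<Rightarrow> bins[j := i # bins ! j])"

lemma map_bin_load_bf_insert:
  "map (bin_load xs) (bf_insert xs bins i) = bf_step (map (bin_load xs) bins) (xs ! i)"
  using best_fit_index_Some(1)[of "map (bin_load xs) bins" "xs ! i"]
  by (auto simp: bf_insert_def bf_step_best_fit_index map_update add.commute split: option.split)

lemma bf_insert_cases:
  obtains (new_bin) "\<forall>j<length bins. bin_load xs (bins ! j) + xs ! i > 1"
      "bf_insert xs bins i = bins @ [[i]]"
  | (best_bin) j0 where "j0 < length bins" "bin_load xs (bins ! j0) + xs ! i \<le> 1"
      "\<And>j. j < length bins \<Longrightarrow> bin_load xs (bins ! j) + xs ! i \<le> 1 \<Longrightarrow>
         bin_load xs (bins ! j) \<le> bin_load xs (bins ! j0)"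
      "bf_insert xs bins i = bins[j0 := i # bins ! j0]"
proof (cases "best_fit_index (map (bin_load xs) bins) (xs ! i)")
  case None
  have "\<forall>j<length bins. bin_load xs (bins ! j) + xs ! i > 1"
    using best_fit_index_None[OF None] by simp
  moreover have "bf_insert xs bins i = bins @ [[i]]" using None by (simp add: bf_insert_def)
  ultimately show ?thesis by (rule new_bin)
next
  case (Some j)
  note fit = best_fit_index_Some[OF Some]
  have "j < length bins" "bin_load xs (bins ! j) + xs ! i \<le> 1" using fit(1,2) by simp_all
  moreover have "bin_load xs (bins ! j') \<le> bin_load xs (bins ! j)"
    if "j' < length bins" "bin_load xs (bins ! j') + xs ! i \<le> 1" for j'
    using fit(1) fit(3)[of j'] that by simp
  moreover have "bf_insert xs bins i = bins[j := i # bins ! j]"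
    using Some by (simp add: bf_insert_def)
  ultimately show ?thesis by (rule best_bin)
qed

definition bf_bins :: "real list \<Rightarrow> (nat \<Rightarrow> nat) \<Rightarrow> nat \<Rightarrow> nat list list" where
  "bf_bins xs \<pi> t = foldl (bf_insert xs) [] (map \<pi> [0..<t])"

lemma bf_bins_0 [simp]: "bf_bins xs \<pi> 0 = []"
  by (simp add: bf_bins_def)

lemma bf_bins_Suc: "bf_bins xs \<pi> (Suc t) = bf_insert xs (bf_bins xs \<pi> t) (\<pi> t)"
  by (simp add: bf_bins_def)

lemma BF_permute_list_by: "BF (permute_list_by \<pi> xs) = length (bf_bins xs \<pi> (length xs))"
proof -
  have "map (bin_load xs) (foldl (bf_insert xs) bins is)
      = foldl bf_step (map (bin_load xs) bins) (map (\<lambda>i. xs ! i) is)" for bins "is"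
    by (induction "is" arbitrary: bins) (simp_all add: map_bin_load_bf_insert)
  from this[of "[]" "map \<pi> [0..<length xs]"]
  have "map (bin_load xs) (bf_bins xs \<pi> (length xs)) = foldl bf_step [] (permute_list_by \<pi> xs)"
    by (simp add: bf_bins_def permute_list_by_def comp_def)
  then show ?thesis unfolding BF_def by (metis length_map)
qed

section \<open>Best Fit states for items larger than 1/3\<close>

definition sizes_above_third :: "real list \<Rightarrow> bool" where
  "sizes_above_third xs \<longleftrightarrow> (\<forall>i<length xs. 1/3 < xs ! i \<and> xs ! i \<le> 1)"

text \<open>An invariant of Best Fit on items larger than 1/3. No two singleton bins fit together,
  since the later item would have joined the earlier bin.\<close>

definition bf_state :: "real list \<Rightarrow> nat set \<Rightarrow> nat list list \<Rightarrow> bool" where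
  "bf_state xs A bins \<longleftrightarrow> mset (concat bins) = mset_set A
     \<and> (\<forall>B\<in>set bins. B \<noteq> [] \<and> length B \<le> 2 \<and> bin_load xs B \<le> 1)
     \<and> (\<forall>j<length bins. \<forall>j'<length bins. j \<noteq> j' \<longrightarrow> length (bins ! j) = 1 \<longrightarrow>
          length (bins ! j') = 1 \<longrightarrow> bin_load xs (bins ! j) + bin_load xs (bins ! j') > 1)"

lemma length_Suc_0_conv_hd: "length B = Suc 0 \<Longrightarrow> B = [hd B]"
  by (cases B) auto

lemma length_2_conv_nth: "length B = 2 \<Longrightarrow> B = [B ! 0, B ! 1]"
  by (cases B; cases "tl B") auto

lemma bf_state_set_concat: "bf_state xs A bins \<Longrightarrow> finite A \<Longrightarrow> set (concat bins) = A"
  unfolding bf_state_def by (metis finite_set_mset_mset_set set_mset_mset)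

lemma bf_state_item:
  "bf_state xs A bins \<Longrightarrow> finite A \<Longrightarrow> B \<in> set bins \<Longrightarrow> u \<in> set B \<Longrightarrow> u \<in> A"
  using bf_state_set_concat by fastforce

lemma bf_state_singletons_overflow:
  assumes st: "bf_state xs A bins" and "[u] \<in> set bins" "[v] \<in> set bins" "u \<noteq> v"
  shows "xs ! u + xs ! v > 1"
proof -
  obtain j j' where j: "j < length bins" "bins ! j = [u]" "j' < length bins" "bins ! j' = [v]"
    using assms(2,3) by (auto simp: in_set_conv_nth)
  with \<open>u \<noteq> v\<close> have "j \<noteq> j'" by auto
  with j show ?thesis
    using st[unfolded bf_state_def, THEN conjunct2, THEN conjunct2, rule_format, of j j'] by simp
qed

lemma bf_state_fitting_bin_singleton:
  assumes "bf_state xs A bins" "finite A" "A \<subseteq> {..<length xs}" "sizes_above_third xs"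
    and "i < length xs" "j < length bins" "bin_load xs (bins ! j) + xs ! i \<le> 1"
  shows "length (bins ! j) = 1"
proof (rule ccontr)
  assume "length (bins ! j) \<noteq> 1"
  moreover have "bins ! j \<noteq> []" "length (bins ! j) \<le> 2"
    using assms(1,6) unfolding bf_state_def by auto
  ultimately have two: "length (bins ! j) = 2" by (cases "bins ! j") (auto simp: le_Suc_eq)
  then have "bins ! j ! 0 \<in> set (bins ! j)" "bins ! j ! 1 \<in> set (bins ! j)" by simp_all
  then have "bins ! j ! 0 \<in> A" "bins ! j ! 1 \<in> A"
    using bf_state_item[OF assms(1,2) nth_mem[OF assms(6)]] by auto
  then have "xs ! (bins ! j ! 0) > 1/3" "xs ! (bins ! j ! 1) > 1/3" "xs ! i > 1/3"
    using assms(3-5) unfolding sizes_above_third_def by auto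
  moreover have "bin_load xs (bins ! j) = xs ! (bins ! j ! 0) + xs ! (bins ! j ! 1)"
    by (subst length_2_conv_nth[OF two]) simp
  ultimately show False using assms(7) by linarith
qed

lemma mset_concat_list_update:
  "j < length bins \<Longrightarrow>
     mset (concat (bins[j := B])) + mset (bins ! j) = mset (concat bins) + mset B"
  by (induction bins arbitrary: j) (auto simp: add_ac split: nat.split)

lemma bf_state_bf_insert:
  assumes st: "bf_state xs A bins" and fin: "finite A" and sub: "A \<subseteq> {..<length xs}"
    and sz: "sizes_above_third xs" and i: "i \<notin> A" "i < length xs"
  shows "bf_state xs (insert i A) (bf_insert xs bins i)"
  using bf_insert_cases[of bins xs i]
proof cases
  case new_bin
  let ?bins = "bins @ [[i]]"
  have "bin_load xs (?bins ! j) + bin_load xs (?bins ! j') > 1"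
    if j: "j < length ?bins" "j' < length ?bins" "j \<noteq> j'"
      "length (?bins ! j) = 1" "length (?bins ! j') = 1" for j j'
  proof -
    consider "j < length bins" "j' < length bins" | "j = length bins" "j' < length bins"
      | "j < length bins" "j' = length bins" using j(1-3) by (fastforce simp: less_Suc_eq)
    then show ?thesis
      using st new_bin(1) j unfolding bf_state_def by cases (auto simp: nth_append add.commute)
  qed
  then show ?thesis
    using st fin i sz new_bin(2) unfolding bf_state_def sizes_above_third_def by auto
next
  case (best_bin j0)
  have one: "length (bins ! j0) = 1"
    using bf_state_fitting_bin_singleton[OF st fin sub sz i(2) best_bin(1,2)] .
  let ?bins = "bins[j0 := i # bins ! j0]"
  have "mset (concat ?bins) = mset_set (insert i A)"
    using mset_concat_list_update[OF best_bin(1), of "i # bins ! j0"] st fin i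
    unfolding bf_state_def by simp
  moreover have "B \<noteq> [] \<and> length B \<le> 2 \<and> bin_load xs B \<le> 1" if "B \<in> set ?bins" for B
  proof -
    obtain k where k: "k < length bins" "B = ?bins ! k"
      using \<open>B \<in> set ?bins\<close> by (auto simp: in_set_conv_nth)
    show ?thesis
      using st best_bin(1,2) one k unfolding bf_state_def
      by (cases "k = j0") (auto simp: add.commute)
  qed
  moreover have "bin_load xs (?bins ! j) + bin_load xs (?bins ! j') > 1"
    if "j < length ?bins" "j' < length ?bins" "j \<noteq> j'"
      "length (?bins ! j) = 1" "length (?bins ! j') = 1" for j j'
  proof -
    have "j \<noteq> j0" "j' \<noteq> j0" using that one best_bin(1) by auto
    then show ?thesis using st that unfolding bf_state_def by auto
  qed
  ultimately show ?thesis using best_bin(4) unfolding bf_state_def by simp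
qed

lemma bf_state_bf_bins:
  assumes sz: "sizes_above_third xs" and \<pi>: "\<pi> permutes {..<length xs}" and t: "t \<le> length xs"
  shows "bf_state xs (\<pi> ` {..<t}) (bf_bins xs \<pi> t)"
  using t
proof (induction t)
  case 0
  then show ?case by (simp add: bf_state_def)
next
  case (Suc t)
  have "\<pi> t \<notin> \<pi> ` {..<t}" "\<pi> ` {..<t} \<subseteq> {..<length xs}" "\<pi> t < length xs"
    using permutes_inj[OF \<pi>] permutes_in_image[OF \<pi>] Suc.prems
    by (auto dest: injD)
  then show ?case
    unfolding bf_bins_Suc lessThan_Suc image_insert
    using Suc by (intro bf_state_bf_insert[OF _ _ _ sz]) auto
qed

text \<open>An LS bin holds a large item together with (by its load) a small one.\<close>

definition is_ls_bin :: "real list \<Rightarrow> nat list \<Rightarrow> bool" where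
  "is_ls_bin xs B \<longleftrightarrow> length B = 2 \<and> (\<exists>u\<in>set B. xs ! u > 1/2)"

definition is_small_singleton :: "real list \<Rightarrow> nat list \<Rightarrow> bool" where
  "is_small_singleton xs B \<longleftrightarrow> length B = 1 \<and> (\<forall>u\<in>set B. xs ! u \<le> 1/2)"

definition num_ls_bins :: "real list \<Rightarrow> nat list list \<Rightarrow> nat" where
  "num_ls_bins xs bins = length (filter (is_ls_bin xs) bins)"

definition num_large :: "real list \<Rightarrow> nat" where
  "num_large xs = card {i. i < length xs \<and> xs ! i > 1/2}"

definition num_small :: "real list \<Rightarrow> nat" where
  "num_small xs = card {i. i < length xs \<and> xs ! i \<le> 1/2}"

lemma length_eq_num_large_num_small: "length xs = num_large xs + num_small xs"
proof -
  have "{..<length xs} = {i. i < length xs \<and> xs ! i > 1/2} \<union> {i. i < length xs \<and> xs ! i \<le> 1/2}"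
    by auto
  then have "card {..<length xs}
      = card {i. i < length xs \<and> xs ! i > 1/2} + card {i. i < length xs \<and> xs ! i \<le> 1/2}"
    by (simp add: card_Un_disjoint disjoint_iff)
  then show ?thesis unfolding num_large_def num_small_def by simp
qed

lemma singleton_in_set_list_update:
  "[v] \<in> set bins \<Longrightarrow> bins ! j = [u] \<Longrightarrow> v \<noteq> u \<Longrightarrow> [v] \<in> set (bins[j := B])"
  by (metis in_set_conv_nth length_list_update list.inject nth_list_update_neq)

lemma num_ls_bins_list_update:
  "j < length L \<Longrightarrow> num_ls_bins xs (L[j := B]) + (if is_ls_bin xs (L ! j) then 1 else 0)
     = num_ls_bins xs L + (if is_ls_bin xs B then 1 else 0)"
  unfolding num_ls_bins_def
proof (induction L arbitrary: j)
  case (Cons b L)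
  then show ?case by (cases j) auto
qed simp

lemma bin_weight_identity:
  assumes "B \<noteq> []" "length B \<le> 2" "bin_load xs B \<le> 1" "set B \<subseteq> {..<length xs}"
    and "sizes_above_third xs"
  shows "2 + (if is_ls_bin xs B then 1 else 0) =
     2 * length (filter (\<lambda>u. xs ! u > 1/2) B) + length (filter (\<lambda>u. xs ! u \<le> 1/2) B)
       + (if is_small_singleton xs B then 1 else 0)"
proof -
  consider u where "B = [u]" | u v where "B = [u, v]"
    using assms(1,2) by (cases B; cases "tl B") (auto simp: le_Suc_eq)
  then show ?thesis
  proof cases
    case (1 u)
    then show ?thesis by (auto simp: is_ls_bin_def is_small_singleton_def)
  next
    case (2 u v)
    have "xs ! u > 1/3" "xs ! v > 1/3" "xs ! u + xs ! v \<le> 1"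
      using assms(3-5) 2 by (auto simp: sizes_above_third_def)
    then have "\<not> (xs ! u > 1/2 \<and> xs ! v > 1/2)" by linarith
    then show ?thesis
      using 2 by (cases "xs ! u > 1/2"; cases "xs ! v > 1/2")
        (auto simp: is_ls_bin_def is_small_singleton_def)
  qed
qed

lemma length_filter_concat_full:
  fixes bins :: "nat list list"
  assumes "mset (concat bins) = mset_set {..<n}"
  shows "length (filter P (concat bins)) = card {i. i < n \<and> P i}"
proof -
  have "length (filter P (concat bins)) = size (filter_mset P (mset_set {..<n}))"
    by (metis assms mset_filter size_mset)
  also have "\<dots> = size (mset_set {i \<in> {..<n}. P i})"
    by (rule arg_cong[where f = size], rule filter_mset_mset_set) simp
  also have "\<dots> = card {i. i < n \<and> P i}"
    by (simp only: size_mset_set lessThan_iff)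
  finally show ?thesis .
qed

lemma bf_state_count:
  assumes st: "bf_state xs {..<length xs} bins" and sz: "sizes_above_third xs"
  shows "2 * length bins + num_ls_bins xs bins
           = 2 * num_large xs + num_small xs + length (filter (is_small_singleton xs) bins)"
proof -
  have sum_if: "(\<Sum>B\<leftarrow>L. if P B then 1 else 0) = length (filter P L)" for P and L :: "nat list list"
    by (induction L) auto
  have sum_filter: "(\<Sum>B\<leftarrow>L. length (filter P B)) = length (filter P (concat L))" for P L
    by (induction L) auto
  have ms: "mset (concat bins) = mset_set {..<length xs}" using st by (simp add: bf_state_def)
  have "\<And>B. B \<in> set bins \<Longrightarrow> set B \<subseteq> {..<length xs}"
    using bf_state_item[OF st] by blast
  then have "(\<Sum>B\<leftarrow>bins. 2 + (if is_ls_bin xs B then 1 else 0)) =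
        (\<Sum>B\<leftarrow>bins. 2 * length (filter (\<lambda>u. xs ! u > 1/2) B)
          + length (filter (\<lambda>u. xs ! u \<le> 1/2) B) + (if is_small_singleton xs B then 1 else 0))"
    using st sz unfolding bf_state_def
    by (intro arg_cong[where f = sum_list] map_cong refl bin_weight_identity) auto
  also have "\<dots> = 2 * num_large xs + num_small xs + length (filter (is_small_singleton xs) bins)"
    by (simp add: sum_list_addf sum_list_const_mult sum_filter sum_if
        length_filter_concat_full[OF ms] num_large_def num_small_def)
  moreover have "(\<Sum>B\<leftarrow>bins. 2 + (if is_ls_bin xs B then 1 else 0))
      = 2 * length bins + num_ls_bins xs bins"
    unfolding num_ls_bins_def by (induction bins) auto
  ultimately show ?thesis by simp
qed

lemma bf_state_small_singletons:
  assumes st: "bf_state xs A bins"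
  shows "length (filter (is_small_singleton xs) bins) \<le> 1"
proof -
  have load: "bin_load xs B \<le> 1/2" if "is_small_singleton xs B" for B
    using that by (cases B) (auto simp: is_small_singleton_def)
  have fin: "finite {j. j < length bins \<and> is_small_singleton xs (bins ! j)}" by simp
  have "card {j. j < length bins \<and> is_small_singleton xs (bins ! j)} \<le> 1"
    unfolding One_nat_def card_le_Suc0_iff_eq[OF fin]
  proof (intro ballI, rule ccontr)
    fix j j' assume j: "j \<in> {j. j < length bins \<and> is_small_singleton xs (bins ! j)}"
      "j' \<in> {j. j < length bins \<and> is_small_singleton xs (bins ! j)}" "j \<noteq> j'"
    then have "bin_load xs (bins ! j) + bin_load xs (bins ! j') > 1"
      using st unfolding bf_state_def is_small_singleton_def by auto
    moreover have "bin_load xs (bins ! j) \<le> 1/2" "bin_load xs (bins ! j') \<le> 1/2"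
      using j(1,2) load by auto
    ultimately show False by linarith
  qed
  then show ?thesis by (simp add: length_filter_conv_card)
qed

section \<open>Pairs completed in order are paid for by LS bins\<close>

definition ls_matching :: "real list \<Rightarrow> (nat \<times> nat) set \<Rightarrow> bool" where
  "ls_matching xs M \<longleftrightarrow> finite M \<and> inj_on fst M \<and> inj_on snd M \<and>
     (\<forall>k\<in>M. fst k < length xs \<and> snd k < length xs \<and> xs ! fst k > 1/2 \<and> xs ! snd k \<le> 1/2
        \<and> xs ! fst k + xs ! snd k \<le> 1)"

lemma card_fiber_le_1_if_inj_on:
  assumes "finite A" "inj_on g A" shows "card {k\<in>A. g k = a} \<le> 1"
  using assms unfolding One_nat_def by (subst card_le_Suc0_iff_eq) (auto simp: inj_on_def)

lemma ls_matching_pairs: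
  assumes "ls_matching xs M"
  shows "\<forall>k\<in>M. fst k < length xs \<and> snd k < length xs \<and> fst k \<noteq> snd k"
    and "pairwise (\<lambda>k k'. disjnt {fst k, snd k} {fst k', snd k'}) M"
proof -
  have props: "fst k < length xs \<and> snd k < length xs \<and> xs ! fst k > 1/2 \<and> xs ! snd k \<le> 1/2"
    if "k \<in> M" for k
    using assms that by (simp add: ls_matching_def)
  show "\<forall>k\<in>M. fst k < length xs \<and> snd k < length xs \<and> fst k \<noteq> snd k"
  proof
    fix k assume "k \<in> M"
    with props[of k] show "fst k < length xs \<and> snd k < length xs \<and> fst k \<noteq> snd k" by auto
  qed
  have "fst k \<noteq> fst k'" "snd k \<noteq> snd k'" if "k \<in> M" "k' \<in> M" "k \<noteq> k'" for k k'
    using assms that by (auto simp: ls_matching_def inj_on_def)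
  moreover have "fst k \<noteq> snd k'" if "k \<in> M" "k' \<in> M" for k k'
    using props[OF that(1)] props[OF that(2)] by auto
  ultimately show "pairwise (\<lambda>k k'. disjnt {fst k, snd k} {fst k', snd k'}) M"
    unfolding pairwise_def by (simp add: disjnt_insert1 disjnt_insert2) (metis)
qed

lemma ls_matching_card_le:
  assumes "ls_matching xs M"
  shows "card M \<le> num_large xs" "card M \<le> num_small xs"
proof -
  have "fst ` M \<subseteq> {i. i < length xs \<and> xs ! i > 1/2}" "snd ` M \<subseteq> {i. i < length xs \<and> xs ! i \<le> 1/2}"
    "card (fst ` M) = card M" "card (snd ` M) = card M"
    using assms by (auto simp: ls_matching_def card_image)
  then show "card M \<le> num_large xs" "card M \<le> num_small xs"
    unfolding num_large_def num_small_def by (auto dest!: card_mono[rotated])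
qed

lemma snd_image_eq_small:
  assumes "ls_matching xs M" "card M = num_small xs"
  shows "snd ` M = {i. i < length xs \<and> xs ! i \<le> 1/2}"
proof (rule card_subset_eq)
  show "snd ` M \<subseteq> {i. i < length xs \<and> xs ! i \<le> 1/2}" using assms(1) by (auto simp: ls_matching_def)
  show "card (snd ` M) = card {i. i < length xs \<and> xs ! i \<le> 1/2}"
    using assms by (simp add: ls_matching_def card_image num_small_def)
qed simp

locale matched_items =
  fixes xs :: "real list" and M :: "(nat \<times> nat) set"
  assumes sizes: "sizes_above_third xs" and matching: "ls_matching xs M"
begin

lemma finite_M: "finite M"
  using matching by (simp add: ls_matching_def)

lemma pair_sizes:
  "k \<in> M \<Longrightarrow> fst k < length xs \<and> snd k < length xs \<and> xs ! fst k > 1/2 \<and> xs ! snd k \<le> 1/2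
     \<and> xs ! fst k + xs ! snd k \<le> 1"
  using matching by (simp add: ls_matching_def)

lemma card_fst_le_1: "card {k\<in>M. fst k = a \<and> P k} \<le> 1"
  using finite_M matching unfolding One_nat_def ls_matching_def
  by (subst card_le_Suc0_iff_eq) (auto simp: inj_on_def)

lemma card_snd_le_1: "card {k\<in>M. snd k = a \<and> P k} \<le> 1"
  using finite_M matching unfolding One_nat_def ls_matching_def
  by (subst card_le_Suc0_iff_eq) (auto simp: inj_on_def)

definition pending :: "nat set \<Rightarrow> (nat \<times> nat) set" where
  "pending A = {k\<in>M. fst k \<in> A \<and> snd k \<notin> A}"

text \<open>The invariant after the items of A have arrived, where c counts the pairs completed
  with the large item first. Each pending pair outside U has a witness: a distinct singleton
  bin holding a large item no larger than its own large item, so that its small item will fit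
  there. The pairs in U and the c completed pairs are paid for by distinct LS bins.\<close>

definition arrival_invariant :: "nat set \<Rightarrow> nat \<Rightarrow> nat list list \<Rightarrow> bool" where
  "arrival_invariant A c bins \<longleftrightarrow> (\<exists>U f. U \<subseteq> pending A \<and> inj_on f (pending A - U) \<and>
     (\<forall>k\<in>pending A - U. [f k] \<in> set bins \<and> xs ! f k > 1/2 \<and> xs ! f k \<le> xs ! fst k) \<and>
     c + card U \<le> num_ls_bins xs bins)"

lemma arrival_invariantI:
  assumes "pending A - U = P" "U \<subseteq> pending A" "inj_on f P"
    "\<forall>k\<in>P. [f k] \<in> set bins \<and> xs ! f k > 1/2 \<and> xs ! f k \<le> xs ! fst k"
    "c + card U \<le> num_ls_bins xs bins"
  shows "arrival_invariant A c bins"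
  unfolding arrival_invariant_def using assms by blast

end

locale arrival_step = matched_items +
  fixes A :: "nat set" and bins :: "nat list list" and i c :: nat
    and U :: "(nat \<times> nat) set" and f :: "nat \<times> nat \<Rightarrow> nat"
  assumes state: "bf_state xs A bins" and finite_A: "finite A" and A_sub: "A \<subseteq> {..<length xs}"
    and i_new: "i < length xs" "i \<notin> A"
    and U_sub: "U \<subseteq> pending A" and f_inj: "inj_on f (pending A - U)"
    and witness: "\<And>k. k \<in> pending A - U \<Longrightarrow>
       [f k] \<in> set bins \<and> xs ! f k > 1/2 \<and> xs ! f k \<le> xs ! fst k"
    and count: "c + card U \<le> num_ls_bins xs bins"
begin

definition closed_pairs :: "(nat \<times> nat) set" where
  "closed_pairs = {k\<in>M. snd k = i \<and> fst k \<in> A}"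

definition opened_pairs :: "(nat \<times> nat) set" where
  "opened_pairs = {k\<in>M. fst k = i \<and> snd k \<notin> A}"

lemma pending_insert: "pending (insert i A) = (pending A - closed_pairs) \<union> opened_pairs"
  using pair_sizes i_new by (fastforce simp: pending_def closed_pairs_def opened_pairs_def)

lemma closed_pairs_subset: "closed_pairs \<subseteq> pending A"
  using i_new by (auto simp: closed_pairs_def pending_def)

lemma opened_pairs_disjoint: "opened_pairs \<inter> pending A = {}"
  using i_new by (auto simp: opened_pairs_def pending_def)

lemma finite_pending: "finite (pending A)"
  using finite_M by (simp add: pending_def)

lemma witness_in_A: "k \<in> pending A - U \<Longrightarrow> f k \<in> A"
  using witness bf_state_item[OF state finite_A] by (meson list.set_intros(1))

lemma closed_fits_witness:
  assumes "k \<in> closed_pairs - U" shows "xs ! f k + xs ! i \<le> 1"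
  using assms closed_pairs_subset witness[of k] pair_sizes[of k] by (auto simp: closed_pairs_def)

lemma closed_empty_if_large: "xs ! i > 1/2 \<Longrightarrow> closed_pairs = {}"
  using pair_sizes by (fastforce simp: closed_pairs_def)

lemma opened_empty_if_small: "xs ! i \<le> 1/2 \<Longrightarrow> opened_pairs = {}"
  using pair_sizes by (fastforce simp: opened_pairs_def)

text \<open>All but two cases of a Best Fit step are settled by charging: the pairs in K give up their
  witnesses, and they and the newly pending pairs are paid for by new LS bins.\<close>

lemma step_by_charging:
  assumes closed_paid: "closed_pairs \<subseteq> U" and K: "K \<subseteq> pending A - U"
    and ls: "card K + card opened_pairs + num_ls_bins xs bins \<le> num_ls_bins xs bins'"
    and kept: "\<And>k. k \<in> pending A - U - K \<Longrightarrow> [f k] \<in> set bins'"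
  shows "arrival_invariant (insert i A) (c + card closed_pairs) bins'"
proof -
  define U' where "U' = (U - closed_pairs) \<union> K \<union> opened_pairs"
  have finU: "finite U" using U_sub finite_pending finite_subset by blast
  have "card U' \<le> card (U - closed_pairs) + card K + card opened_pairs"
    unfolding U'_def by (meson add_le_mono card_Un_le le_trans order_refl)
  moreover have "card (U - closed_pairs) + card closed_pairs = card U"
    using closed_paid finU by (metis card_Diff_subset card_mono finite_subset le_add_diff_inverse2)
  ultimately have "c + card closed_pairs + card U' \<le> num_ls_bins xs bins'"
    using count ls by linarith
  moreover have "pending (insert i A) - U' = pending A - U - K"
    using closed_paid K U_sub opened_pairs_disjoint unfolding pending_insert U'_def by blast
  moreover have "U' \<subseteq> pending (insert i A)"
    using U_sub K closed_paid unfolding pending_insert U'_def by blast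
  moreover have "inj_on f (pending A - U - K)"
    using f_inj by (rule inj_on_subset) blast
  ultimately show ?thesis
    using witness kept by (intro arrival_invariantI[where P = "pending A - U - K"]) auto
qed

text \<open>A large item opening a new bin becomes the witness of its own pending pair.\<close>

lemma step_new_large_bin:
  assumes large: "xs ! i > 1/2"
  shows "arrival_invariant (insert i A) (c + card closed_pairs) (bins @ [[i]])"
proof -
  define f' where "f' k = (if k \<in> opened_pairs then i else f k)" for k
  have "inj_on f' opened_pairs"
    using card_fst_le_1[of i "\<lambda>k. snd k \<notin> A"] finite_M
    unfolding opened_pairs_def f'_def One_nat_def
    by (subst (asm) card_le_Suc0_iff_eq) (auto simp: inj_on_def)
  moreover have "inj_on f' (pending A - U)"
    using f_inj opened_pairs_disjoint by (auto simp: f'_def inj_on_def)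
  moreover have "f' ` (pending A - U) \<inter> f' ` opened_pairs = {}"
    using witness_in_A opened_pairs_disjoint i_new by (auto simp: f'_def)
  ultimately have "inj_on f' ((pending A - U) \<union> opened_pairs)"
    by (auto simp: inj_on_Un)
  moreover have "pending (insert i A) - U = (pending A - U) \<union> opened_pairs"
    using closed_empty_if_large[OF large] opened_pairs_disjoint U_sub
    unfolding pending_insert by auto
  moreover have "U \<subseteq> pending (insert i A)"
    using U_sub closed_empty_if_large[OF large] unfolding pending_insert by auto
  moreover have "c + card closed_pairs + card U \<le> num_ls_bins xs (bins @ [[i]])"
    using count closed_empty_if_large[OF large] by (simp add: num_ls_bins_def is_ls_bin_def)
  moreover have "\<forall>k\<in>(pending A - U) \<union> opened_pairs.
      [f' k] \<in> set (bins @ [[i]]) \<and> xs ! f' k > 1/2 \<and> xs ! f' k \<le> xs ! fst k"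
    using witness opened_pairs_disjoint large by (auto simp: f'_def opened_pairs_def)
  ultimately show ?thesis by (intro arrival_invariantI) auto
qed

text \<open>A small item joining the singleton bin of a large item u completes a pair k whose
  witness is no larger than u (Best Fit chose u), so the witness of k can take over the
  role of u.\<close>

lemma step_reroute:
  assumes k: "k \<in> closed_pairs - U"
    and best: "xs ! f k \<le> xs ! u"
    and ls: "num_ls_bins xs bins' = num_ls_bins xs bins + 1"
    and kept: "\<And>v. [v] \<in> set bins \<Longrightarrow> v \<noteq> u \<Longrightarrow> [v] \<in> set bins'"
  shows "arrival_invariant (insert i A) (c + card closed_pairs) bins'"
proof -
  have kP: "k \<in> pending A - U" using k closed_pairs_subset by blast
  have "card closed_pairs \<le> 1" "finite closed_pairs"
    using card_snd_le_1[of i "\<lambda>k. fst k \<in> A"] finite_M by (simp_all add: closed_pairs_def)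
  then have "closed_pairs = {k}"
    using k unfolding One_nat_def card_le_Suc0_iff_eq[OF \<open>finite closed_pairs\<close>] by blast
  moreover have "xs ! i \<le> 1/2"
    using k pair_sizes[of k] by (simp add: closed_pairs_def)
  then have "opened_pairs = {}" by (rule opened_empty_if_small)
  ultimately have P': "pending (insert i A) - U = pending A - U - {k}"
    unfolding pending_insert by blast
  define f' where "f' k' = (if f k' = u then f k else f k')" for k'
  have other: "f k' \<noteq> f k" if "k' \<in> pending A - U - {k}" for k'
    using f_inj kP that by (auto simp: inj_on_def)
  have "inj_on f' (pending A - U - {k})"
  proof (rule inj_onI)
    fix k1 k2 assume k12: "k1 \<in> pending A - U - {k}" "k2 \<in> pending A - U - {k}" "f' k1 = f' k2"
    then have "f k1 = f k2"
      using other[OF k12(1)] other[OF k12(2)] unfolding f'_def by (auto split: if_splits)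
    then show "k1 = k2" using f_inj k12(1,2) by (auto dest: inj_onD)
  qed
  moreover have "[f' k'] \<in> set bins' \<and> xs ! f' k' > 1/2 \<and> xs ! f' k' \<le> xs ! fst k'"
    if k': "k' \<in> pending A - U - {k}" for k'
  proof (cases "f k' = u")
    case True
    then have "f' k' = f k" "f k \<noteq> u" using other[OF k'] by (simp_all add: f'_def)
    then show ?thesis using witness[OF kP] witness[of k'] kept[of "f k"] k' best True by auto
  next
    case False
    then show ?thesis using witness[of k'] kept[of "f k'"] k' by (simp add: f'_def)
  qed
  moreover have "U \<subseteq> pending (insert i A)"
    using U_sub k \<open>closed_pairs = {k}\<close> unfolding pending_insert by auto
  moreover have "c + card closed_pairs + card U \<le> num_ls_bins xs bins'"
    using count ls \<open>closed_pairs = {k}\<close> by simp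
  ultimately show ?thesis by (intro arrival_invariantI[OF P']) auto
qed

lemma step_new_bin:
  assumes no_fit: "\<forall>j<length bins. bin_load xs (bins ! j) + xs ! i > 1"
  shows "arrival_invariant (insert i A) (c + card closed_pairs) (bins @ [[i]])"
proof (cases "xs ! i > 1/2")
  case True
  then show ?thesis by (rule step_new_large_bin)
next
  case False
  have "closed_pairs \<subseteq> U"
  proof (rule subsetI, rule ccontr)
    fix k assume "k \<in> closed_pairs" "k \<notin> U"
    then have "[f k] \<in> set bins" "xs ! f k + xs ! i \<le> 1"
      using closed_pairs_subset witness[of k] closed_fits_witness[of k] by auto
    then show False using no_fit by (auto simp: in_set_conv_nth)
  qed
  then show ?thesis
    using False opened_empty_if_small
  proof (intro step_by_charging[where K = "{}"])
    show "[f k] \<in> set (bins @ [[i]])" if "k \<in> pending A - U - {}" for k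
      using that witness[of k] by simp
  qed (auto simp: num_ls_bins_def is_ls_bin_def)
qed

lemma step_join_large_bin:
  assumes j0: "j0 < length bins" "bins ! j0 = [u]"
    and large_u: "xs ! u > 1/2" and small_i: "xs ! i \<le> 1/2"
    and best: "\<And>v. [v] \<in> set bins \<Longrightarrow> xs ! v + xs ! i \<le> 1 \<Longrightarrow> xs ! v \<le> xs ! u"
  shows "arrival_invariant (insert i A) (c + card closed_pairs) (bins[j0 := [i, u]])"
proof -
  have ls: "num_ls_bins xs (bins[j0 := [i, u]]) = num_ls_bins xs bins + 1"
    using num_ls_bins_list_update[OF j0(1), of xs "[i, u]"] j0(2) large_u
    by (simp add: is_ls_bin_def)
  have kept: "[v] \<in> set (bins[j0 := [i, u]])" if "[v] \<in> set bins" "v \<noteq> u" for v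
    using singleton_in_set_list_update[OF that(1) j0(2) that(2)] .
  show ?thesis
  proof (cases "closed_pairs \<subseteq> U")
    case True
    define K where "K = {k \<in> pending A - U. f k = u}"
    have "card K \<le> 1"
      unfolding K_def using finite_pending f_inj by (intro card_fiber_le_1_if_inj_on) auto
    with True ls small_i opened_empty_if_small show ?thesis
    proof (intro step_by_charging[where K = K])
      show "[f k] \<in> set (bins[j0 := [i, u]])" if "k \<in> pending A - U - K" for k
        using that witness[of k] kept[of "f k"] by (auto simp: K_def)
    qed (auto simp: K_def)
  next
    case False
    then obtain k where k: "k \<in> closed_pairs - U" by blast
    have "xs ! f k \<le> xs ! u"
      using k closed_pairs_subset witness[of k] closed_fits_witness[of k] best by blast
    then show ?thesis using step_reroute[OF k _ ls kept] by blast
  qed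
qed

lemma step_join_bin:
  assumes j0: "j0 < length bins" "bins ! j0 = [u]" and fits: "xs ! u + xs ! i \<le> 1"
    and best: "\<And>v. [v] \<in> set bins \<Longrightarrow> xs ! v + xs ! i \<le> 1 \<Longrightarrow> xs ! v \<le> xs ! u"
  shows "arrival_invariant (insert i A) (c + card closed_pairs) (bins[j0 := [i, u]])"
proof (cases "xs ! u > 1/2")
  case False
  have ls: "num_ls_bins xs (bins[j0 := [i, u]])
      = num_ls_bins xs bins + (if xs ! i > 1/2 then 1 else 0)"
    using num_ls_bins_list_update[OF j0(1), of xs "[i, u]"] j0(2) False
    by (simp add: is_ls_bin_def)
  have kept: "[f k] \<in> set (bins[j0 := [i, u]])" if "k \<in> pending A - U" for k
    using witness[OF that] False by (auto intro: singleton_in_set_list_update[OF _ j0(2)])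
  show ?thesis
  proof (cases "xs ! i > 1/2")
    case True
    have "card opened_pairs \<le> 1"
      using card_fst_le_1[of i "\<lambda>k. snd k \<notin> A"] by (simp add: opened_pairs_def)
    with True ls closed_empty_if_large kept show ?thesis
      by (intro step_by_charging[where K = "{}"]) auto
  next
    case small_i: False
    have "closed_pairs \<subseteq> U"
    proof (rule subsetI, rule ccontr)
      fix k assume "k \<in> closed_pairs" "k \<notin> U"
      then have "xs ! f k \<le> xs ! u" "xs ! f k > 1/2"
        using closed_pairs_subset witness[of k] closed_fits_witness[of k] best by auto
      with \<open>\<not> xs ! u > 1/2\<close> show False by linarith
    qed
    with small_i ls opened_empty_if_small kept show ?thesis
      by (intro step_by_charging[where K = "{}"]) auto
  qed
next
  case True
  moreover have "xs ! i \<le> 1/2" using True fits by linarith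
  ultimately show ?thesis using step_join_large_bin[OF j0 _ _ best] by blast
qed

lemma step_bf_insert: "arrival_invariant (insert i A) (c + card closed_pairs) (bf_insert xs bins i)"
  using bf_insert_cases[of bins xs i]
proof cases
  case new_bin
  then show ?thesis using step_new_bin by simp
next
  case (best_bin j0)
  obtain u where u: "bins ! j0 = [u]"
    using bf_state_fitting_bin_singleton[OF state finite_A A_sub sizes i_new(1) best_bin(1,2)]
    by (metis length_Suc_0_conv_hd One_nat_def)
  have "xs ! v \<le> xs ! u" if v: "[v] \<in> set bins" "xs ! v + xs ! i \<le> 1" for v
  proof -
    obtain j where "j < length bins" "bins ! j = [v]" using v(1) by (auto simp: in_set_conv_nth)
    then show ?thesis using v(2) best_bin(3)[of j] u by simp
  qed
  then show ?thesis
    using step_join_bin[OF best_bin(1) u] best_bin(2,4) u by simp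
qed

end

context matched_items
begin

lemma arrival_invariant_bf_insert:
  assumes "bf_state xs A bins" "finite A" "A \<subseteq> {..<length xs}" "i < length xs" "i \<notin> A"
    and "arrival_invariant A c bins"
  shows "arrival_invariant (insert i A) (c + card {k\<in>M. snd k = i \<and> fst k \<in> A})
           (bf_insert xs bins i)"
proof -
  obtain U f where "U \<subseteq> pending A" "inj_on f (pending A - U)"
    "\<forall>k\<in>pending A - U. [f k] \<in> set bins \<and> xs ! f k > 1/2 \<and> xs ! f k \<le> xs ! fst k"
    "c + card U \<le> num_ls_bins xs bins"
    using assms(6) unfolding arrival_invariant_def by blast
  then interpret arrival_step xs M A bins i c U f
    using assms(1-5) by unfold_locales auto
  show ?thesis using step_bf_insert unfolding closed_pairs_def .
qed

end

definition perms :: "nat \<Rightarrow> (nat \<Rightarrow> nat) set" where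
  "perms n = {\<pi>. \<pi> permutes {..<n}}"

lemma finite_perms: "finite (perms n)"
  unfolding perms_def by (rule finite_permutations) simp

lemma card_perms: "card (perms n) = fact n"
  unfolding perms_def by (rule card_permutations) simp_all

text \<open>Item a arrives at position inv \<pi> a of the list permuted by \<pi>.\<close>

definition precedes :: "(nat \<Rightarrow> nat) \<Rightarrow> nat \<Rightarrow> nat \<Rightarrow> bool" where
  "precedes \<pi> a b \<longleftrightarrow> inv \<pi> a < inv \<pi> b"

locale bf_run = matched_items +
  fixes \<pi> :: "nat \<Rightarrow> nat"
  assumes perm: "\<pi> permutes {..<length xs}"
begin

lemma arrived_iff: "a < length xs \<Longrightarrow> a \<in> \<pi> ` {..<t} \<longleftrightarrow> inv \<pi> a < t"
  using permutes_inverses[OF perm] permutes_in_image[OF permutes_inv[OF perm]]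
  by (metis image_iff lessThan_iff)

definition completed_in_order :: "nat \<Rightarrow> (nat \<times> nat) set" where
  "completed_in_order t = {k\<in>M. inv \<pi> (snd k) < t \<and> inv \<pi> (fst k) < inv \<pi> (snd k)}"

lemma card_completed_in_order_Suc:
  assumes "t < length xs"
  shows "card (completed_in_order (Suc t))
    = card (completed_in_order t) + card {k\<in>M. snd k = \<pi> t \<and> fst k \<in> \<pi> ` {..<t}}"
proof -
  have "snd k = \<pi> t \<and> fst k \<in> \<pi> ` {..<t} \<longleftrightarrow>
      inv \<pi> (snd k) = t \<and> inv \<pi> (fst k) < inv \<pi> (snd k)" if "k \<in> M" for k
    using pair_sizes[OF that] arrived_iff[of "fst k" t] permutes_inverses[OF perm] by auto
  then have "{k\<in>M. snd k = \<pi> t \<and> fst k \<in> \<pi> ` {..<t}}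
      = {k\<in>M. inv \<pi> (snd k) = t \<and> inv \<pi> (fst k) < inv \<pi> (snd k)}"
    by blast
  moreover have "completed_in_order (Suc t)
      = completed_in_order t \<union> {k\<in>M. inv \<pi> (snd k) = t \<and> inv \<pi> (fst k) < inv \<pi> (snd k)}"
    by (auto simp: completed_in_order_def)
  moreover have "finite (completed_in_order t)" using finite_M by (simp add: completed_in_order_def)
  ultimately show ?thesis
    by (simp only:) (rule card_Un_disjoint; use finite_M in \<open>auto simp: completed_in_order_def\<close>)
qed

lemma arrival_invariant_bf_bins:
  "t \<le> length xs \<Longrightarrow>
     arrival_invariant (\<pi> ` {..<t}) (card (completed_in_order t)) (bf_bins xs \<pi> t)"
proof (induction t)
  case 0
  have "pending {} = {}" by (simp add: pending_def)
  then show ?case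
    by (simp add: arrival_invariant_def completed_in_order_def)
next
  case (Suc t)
  then have t: "t < length xs" by simp
  have "\<pi> t < length xs" "\<pi> t \<notin> \<pi> ` {..<t}" "\<pi> ` {..<t} \<subseteq> {..<length xs}"
    using t arrived_iff permutes_in_image[OF perm] by (auto simp: permutes_inverses(2)[OF perm])
  then show ?case
    unfolding bf_bins_Suc lessThan_Suc image_insert card_completed_in_order_Suc[OF t]
    using Suc t bf_state_bf_bins[OF sizes perm]
    by (intro arrival_invariant_bf_insert) auto
qed

lemma in_order_pairs_le_num_ls_bins:
  "card {k\<in>M. precedes \<pi> (fst k) (snd k)} \<le> num_ls_bins xs (bf_bins xs \<pi> (length xs))"
proof -
  have all: "\<pi> ` {..<length xs} = {..<length xs}" by (rule permutes_image[OF perm])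
  then have "pending (\<pi> ` {..<length xs}) = {}"
    using pair_sizes by (auto simp: pending_def)
  moreover have "completed_in_order (length xs) = {k\<in>M. precedes \<pi> (fst k) (snd k)}"
    using pair_sizes arrived_iff[of _ "length xs"] all
    by (auto simp: completed_in_order_def precedes_def)
  ultimately show ?thesis
    using arrival_invariant_bf_bins[of "length xs"] by (auto simp: arrival_invariant_def)
qed

lemma final_bf_state: "bf_state xs {..<length xs} (bf_bins xs \<pi> (length xs))"
  using bf_state_bf_bins[OF sizes perm, of "length xs"] permutes_image[OF perm] by simp

lemma num_ls_bins_pos_if_odd_small:
  assumes all_small: "snd ` M = {i. i < length xs \<and> xs ! i \<le> 1/2}" and odd: "odd (num_small xs)"
  shows "num_ls_bins xs (bf_bins xs \<pi> (length xs)) \<noteq> 0"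
proof
  define bins where "bins = bf_bins xs \<pi> (length xs)"
  assume "num_ls_bins xs (bf_bins xs \<pi> (length xs)) = 0"
  then have no_ls: "\<not> is_ls_bin xs B" if "B \<in> set bins" for B
    using that by (auto simp: num_ls_bins_def bins_def filter_empty_conv)
  have st: "bf_state xs {..<length xs} bins" using final_bf_state by (simp add: bins_def)
  have "2 * num_large xs + num_small xs + length (filter (is_small_singleton xs) bins)
      = 2 * length bins"
    using bf_state_count[OF st sizes] \<open>num_ls_bins xs _ = 0\<close> by (simp add: bins_def)
  then have "even (2 * num_large xs + num_small xs + length (filter (is_small_singleton xs) bins))"
    by simp
  then have "odd (length (filter (is_small_singleton xs) bins))"
    using odd by simp
  then have "filter (is_small_singleton xs) bins \<noteq> []" by (intro notI) simp
  then obtain B where B: "B \<in> set bins" "is_small_singleton xs B" by (auto simp: filter_empty_conv)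
  define s where "s = hd B"
  have "B = [s]" using B(2) length_Suc_0_conv_hd[of B] by (simp add: s_def is_small_singleton_def)
  then have s: "[s] \<in> set bins" "xs ! s \<le> 1/2" using B by (auto simp: is_small_singleton_def)
  have "s < length xs" using bf_state_item[OF st _ s(1)] by simp
  then have "s \<in> snd ` M" using all_small s(2) by simp
  then obtain k where k: "k \<in> M" "snd k = s" by (rule imageE) simp
  let ?a = "fst k"
  have "?a \<in> set (concat bins)" using bf_state_set_concat[OF st] pair_sizes[OF k(1)] by simp
  then obtain B' where B': "B' \<in> set bins" "?a \<in> set B'" by auto
  have "B' \<noteq> []" "length B' \<le> 2" using st B'(1) unfolding bf_state_def by blast+
  moreover have "length B' \<noteq> 2" using no_ls[OF B'(1)] B'(2) pair_sizes[OF k(1)]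
    by (auto simp: is_ls_bin_def)
  ultimately have "length B' = 1" by (cases B') (auto simp: le_Suc_eq)
  then have "[?a] \<in> set bins" using B'(1) B'(2) by (cases B') auto
  moreover have "s \<noteq> ?a" using s(2) pair_sizes[OF k(1)] by auto
  ultimately have "xs ! s + xs ! ?a > 1" using bf_state_singletons_overflow[OF st s(1)] by blast
  then show False using pair_sizes[OF k(1)] k(2) by simp
qed

end

lemma BF_precedes_bound:
  assumes "sizes_above_third xs" "ls_matching xs M" "\<pi> \<in> perms (length xs)"
  shows "2 * BF (permute_list_by \<pi> xs) + card {k\<in>M. precedes \<pi> (fst k) (snd k)}
           \<le> 2 * num_large xs + num_small xs + 1"
proof -
  interpret bf_run xs M \<pi> using assms by unfold_locales (simp_all add: perms_def)
  show ?thesis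
    using bf_state_count[OF final_bf_state sizes] bf_state_small_singletons[OF final_bf_state]
      in_order_pairs_le_num_ls_bins
    unfolding BF_permute_list_by by linarith
qed

lemma BF_bound_if_odd_small:
  assumes "sizes_above_third xs" "ls_matching xs M" "\<pi> \<in> perms (length xs)"
    and "snd ` M = {i. i < length xs \<and> xs ! i \<le> 1/2}" "odd (num_small xs)"
  shows "2 * BF (permute_list_by \<pi> xs) \<le> 2 * num_large xs + num_small xs"
proof -
  interpret bf_run xs M \<pi> using assms by unfold_locales (simp_all add: perms_def)
  show ?thesis
    using bf_state_count[OF final_bf_state sizes] bf_state_small_singletons[OF final_bf_state]
      num_ls_bins_pos_if_odd_small[OF assms(4,5)]
    unfolding BF_permute_list_by by linarith
qed

section \<open>A matching from an optimal packing\<close>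

lemma OPT_attained:
  assumes "\<forall>i<length xs. xs ! i \<le> 1"
  shows "\<exists>f. feasible_packing xs (OPT xs) f"
proof -
  have "{i. i < length xs \<and> i = b} = {b}" if "b < length xs" for b
    using that by auto
  then have "feasible_packing xs (length xs) id"
    using assms by (simp add: feasible_packing_def)
  then have "\<exists>k f. feasible_packing xs k f" by blast
  then show ?thesis unfolding OPT_def by (rule LeastI_ex)
qed

lemma feasible_packing_subset_load:
  assumes "feasible_packing xs K f" "c < K" "\<forall>i<length xs. 0 \<le> xs ! i"
    and "X \<subseteq> {i. i < length xs \<and> f i = c}"
  shows "(\<Sum>i\<in>X. xs ! i) \<le> 1"
proof -
  have "(\<Sum>i\<in>X. xs ! i) \<le> (\<Sum>i\<in>{i. i < length xs \<and> f i = c}. xs ! i)"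
    using assms(3,4) by (intro sum_mono2) auto
  also have "\<dots> \<le> 1" using assms(1,2) by (simp add: feasible_packing_def)
  finally show ?thesis .
qed

lemma feasible_packing_card_lt:
  assumes "feasible_packing xs K f" "c < K" "\<forall>i<length xs. 0 \<le> xs ! i"
    and "X \<subseteq> {i. i < length xs \<and> f i = c}" and "\<forall>i\<in>X. xs ! i > t"
  shows "real (card X) * t < 1"
proof (cases "X = {}")
  case False
  have "finite X" using assms(4) by (rule finite_subset) simp
  then have "real (card X) * t = (\<Sum>i\<in>X. t)" by simp
  also have "\<dots> < (\<Sum>i\<in>X. xs ! i)"
    using \<open>finite X\<close> False assms(5) by (intro sum_strict_mono) auto
  also have "\<dots> \<le> 1" using feasible_packing_subset_load[OF assms(1-4)] .
  finally show ?thesis .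
qed simp

definition packing_pairs :: "real list \<Rightarrow> (nat \<Rightarrow> nat) \<Rightarrow> (nat \<times> nat) set" where
  "packing_pairs xs f = {(a, b). a < length xs \<and> b < length xs \<and> xs ! a > 1/2 \<and> xs ! b \<le> 1/2
     \<and> f a = f b}"

context
  fixes xs :: "real list" and K :: nat and f :: "nat \<Rightarrow> nat"
  assumes sizes: "sizes_above_third xs" and packing: "feasible_packing xs K f"
begin

lemma bin_index_lt: "i < length xs \<Longrightarrow> f i < K"
  using packing by (simp add: feasible_packing_def)

lemma sizes_nonneg: "\<forall>i<length xs. 0 \<le> xs ! i"
proof (intro allI impI)
  fix i assume "i < length xs"
  then have "1/3 < xs ! i" using sizes by (simp add: sizes_above_third_def)
  then show "0 \<le> xs ! i" by linarith
qed

lemma card_bin_le_2: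
  assumes "c < K" shows "card {i. i < length xs \<and> f i = c} \<le> 2"
proof -
  have "real (card {i. i < length xs \<and> f i = c}) * (1/3) < 1"
    using sizes by (intro feasible_packing_card_lt[OF packing assms sizes_nonneg])
      (auto simp: sizes_above_third_def)
  then show ?thesis by simp
qed

lemma card_bin_large_le_1:
  assumes "c < K" shows "card {i. i < length xs \<and> xs ! i > 1/2 \<and> f i = c} \<le> 1"
proof -
  have "real (card {i. i < length xs \<and> xs ! i > 1/2 \<and> f i = c}) * (1/2) < 1"
    by (intro feasible_packing_card_lt[OF packing assms sizes_nonneg]) auto
  then show ?thesis by simp
qed

lemma no_three_in_bin:
  assumes "a < length xs" "b < length xs" "b' < length xs" "distinct [a, b, b']"
    and "f b = f a" "f b' = f a"
  shows False
proof -
  have "card {a, b, b'} \<le> card {i. i < length xs \<and> f i = f a}"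
    by (rule card_mono) (use assms in auto)
  also have "\<dots> \<le> 2" using card_bin_le_2[OF bin_index_lt[OF assms(1)]] .
  finally show False using assms(4) by simp
qed

lemma ls_matching_packing_pairs: "ls_matching xs (packing_pairs xs f)"
proof -
  have same_fst: "b = b'" if ab: "(a, b) \<in> packing_pairs xs f" "(a, b') \<in> packing_pairs xs f"
    for a b b'
  proof (rule ccontr)
    assume "b \<noteq> b'"
    with ab show False by (intro no_three_in_bin[of a b b']) (auto simp: packing_pairs_def)
  qed
  have same_snd: "a = a'" if ab: "(a, b) \<in> packing_pairs xs f" "(a', b) \<in> packing_pairs xs f"
    for a a' b
  proof (rule ccontr)
    assume "a \<noteq> a'"
    with ab show False by (intro no_three_in_bin[of b a a']) (auto simp: packing_pairs_def)
  qed
  have "inj_on fst (packing_pairs xs f)"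
  proof (rule inj_onI)
    fix x y assume "x \<in> packing_pairs xs f" "y \<in> packing_pairs xs f" "fst x = fst y"
    then show "x = y" using same_fst[of "fst x" "snd x" "snd y"] by (cases x; cases y) simp
  qed
  moreover have "inj_on snd (packing_pairs xs f)"
  proof (rule inj_onI)
    fix x y assume "x \<in> packing_pairs xs f" "y \<in> packing_pairs xs f" "snd x = snd y"
    then show "x = y" using same_snd[of "fst x" "snd x" "fst y"] by (cases x; cases y) simp
  qed
  moreover have "fst k < length xs \<and> snd k < length xs \<and> xs ! fst k > 1/2 \<and> xs ! snd k \<le> 1/2
      \<and> xs ! fst k + xs ! snd k \<le> 1" if k: "k \<in> packing_pairs xs f" for k
  proof -
    obtain a b where "k = (a, b)" by fastforce
    with k have ab: "a < length xs" "b < length xs" "xs ! a > 1/2" "xs ! b \<le> 1/2" "f b = f a"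
      by (auto simp: packing_pairs_def)
    moreover have "a \<noteq> b" using ab(3,4) by auto
    ultimately have "xs ! a + xs ! b \<le> 1"
      using feasible_packing_subset_load[OF packing bin_index_lt sizes_nonneg, of a "{a, b}"]
      by auto
    with ab \<open>k = (a, b)\<close> show ?thesis by simp
  qed
  moreover have "finite (packing_pairs xs f)"
    by (rule finite_subset[of _ "{..<length xs} \<times> {..<length xs}"]) (auto simp: packing_pairs_def)
  ultimately show ?thesis unfolding ls_matching_def by blast
qed

lemma card_bin_weight:
  assumes "c < K"
  shows "2 * card {i. i < length xs \<and> xs ! i > 1/2 \<and> f i = c}
    + card {i. i < length xs \<and> xs ! i \<le> 1/2 \<and> f i = c}
    \<le> 2 + card {k \<in> packing_pairs xs f. f (fst k) = c}"
proof -
  define L where "L = {i. i < length xs \<and> xs ! i > 1/2 \<and> f i = c}"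
  define S where "S = {i. i < length xs \<and> xs ! i \<le> 1/2 \<and> f i = c}"
  have "{k \<in> packing_pairs xs f. f (fst k) = c} = L \<times> S"
    by (auto simp: packing_pairs_def L_def S_def)
  then have pairs: "card {k \<in> packing_pairs xs f. f (fst k) = c} = card L * card S"
    by (simp add: card_cartesian_product)
  have "L \<union> S = {i. i < length xs \<and> f i = c}" "L \<inter> S = {}" "finite L" "finite S"
    by (auto simp: L_def S_def)
  then have "card L + card S \<le> 2" using card_bin_le_2[OF assms] by (metis card_Un_disjoint)
  moreover have "card L \<le> 1" using card_bin_large_le_1[OF assms] by (simp add: L_def)
  ultimately show ?thesis
    unfolding pairs L_def[symmetric] S_def[symmetric] by (cases "card L") auto
qed

lemma weighted_count_le:
  "2 * num_large xs + num_small xs \<le> 2 * K + card (packing_pairs xs f)"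
proof -
  have group: "card X = (\<Sum>c<K. card {x\<in>X. g x = c})" if "finite X" "g ` X \<subseteq> {..<K}"
    for X :: "'a set" and g
    using sum.group[OF that(1) finite_lessThan that(2), of "\<lambda>_. 1::nat"] by simp
  have large: "num_large xs = (\<Sum>c<K. card {i. i < length xs \<and> xs ! i > 1/2 \<and> f i = c})"
    using group[of "{i. i < length xs \<and> xs ! i > 1/2}" f] bin_index_lt
    by (simp add: num_large_def image_subset_iff conj_assoc)
  have small: "num_small xs = (\<Sum>c<K. card {i. i < length xs \<and> xs ! i \<le> 1/2 \<and> f i = c})"
    using group[of "{i. i < length xs \<and> xs ! i \<le> 1/2}" f] bin_index_lt
    by (simp add: num_small_def image_subset_iff conj_assoc)
  have "(f \<circ> fst) ` packing_pairs xs f \<subseteq> {..<K}"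
    using bin_index_lt by (auto simp: packing_pairs_def)
  then have pairs:
    "card (packing_pairs xs f) = (\<Sum>c<K. card {k \<in> packing_pairs xs f. f (fst k) = c})"
    using group[of "packing_pairs xs f" "f \<circ> fst"] ls_matching_packing_pairs
    by (simp add: ls_matching_def)
  have "2 * num_large xs + num_small xs
      = (\<Sum>c<K. 2 * card {i. i < length xs \<and> xs ! i > 1/2 \<and> f i = c}
          + card {i. i < length xs \<and> xs ! i \<le> 1/2 \<and> f i = c})"
    unfolding large small by (simp add: sum.distrib sum_distrib_left)
  also have "\<dots> \<le> (\<Sum>c<K. 2 + card {k \<in> packing_pairs xs f. f (fst k) = c})"
    by (intro sum_mono card_bin_weight) simp
  also have "\<dots> = 2 * K + card (packing_pairs xs f)"
    unfolding pairs by (simp only: sum.distrib) simp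
  finally show ?thesis .
qed

end

lemma exists_ls_matching_OPT:
  assumes "sizes_above_third xs"
  shows "\<exists>M. ls_matching xs M \<and> 2 * num_large xs + num_small xs \<le> 2 * OPT xs + card M"
proof -
  obtain f where "feasible_packing xs (OPT xs) f"
    using OPT_attained assms by (auto simp: sizes_above_third_def)
  then show ?thesis
    using ls_matching_packing_pairs weighted_count_le assms by blast
qed

section \<open>Random arrival order\<close>

abbreviation swap_comp :: "nat \<Rightarrow> nat \<Rightarrow> (nat \<Rightarrow> nat) \<Rightarrow> nat \<Rightarrow> nat" where
  "swap_comp a b \<pi> \<equiv> Transposition.transpose a b \<circ> \<pi>"

lemma swap_comp_perms: "a < n \<Longrightarrow> b < n \<Longrightarrow> \<pi> \<in> perms n \<Longrightarrow> swap_comp a b \<pi> \<in> perms n"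
  unfolding perms_def by (auto intro!: permutes_compose permutes_swap_id)

lemma bij_betw_swap_comp: "a < n \<Longrightarrow> b < n \<Longrightarrow> bij_betw (swap_comp a b) (perms n) (perms n)"
  by (rule bij_betwI[where g = "swap_comp a b"]) (auto simp: swap_comp_perms comp_assoc[symmetric])

lemma sum_swap_comp:
  "a < n \<Longrightarrow> b < n \<Longrightarrow> (\<Sum>\<pi>\<in>perms n. g (swap_comp a b \<pi>)) = (\<Sum>\<pi>\<in>perms n. g \<pi>)"
  using sum.reindex_bij_betw[OF bij_betw_swap_comp] by blast

lemma precedes_swap_comp:
  assumes "\<pi> \<in> perms n"
  shows "precedes (swap_comp a b \<pi>) c d
           = precedes \<pi> (Transposition.transpose a b c) (Transposition.transpose a b d)"
proof -
  have "bij \<pi>" using assms permutes_bij by (auto simp: perms_def)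
  then have "inv (swap_comp a b \<pi>) = inv \<pi> \<circ> Transposition.transpose a b"
    by (simp add: o_inv_distrib)
  then show ?thesis by (simp add: precedes_def)
qed

lemma precedes_asym_total:
  assumes "\<pi> \<in> perms n" "a \<noteq> b"
  shows "precedes \<pi> a b \<longleftrightarrow> \<not> precedes \<pi> b a"
proof -
  have "\<pi> permutes {..<n}" using assms(1) by (simp add: perms_def)
  then have "inv \<pi> a \<noteq> inv \<pi> b"
    using assms(2) permutes_inverses(1) by metis
  then show ?thesis by (auto simp: precedes_def)
qed

lemma card_precedes_half:
  assumes ab: "a < n" "b < n" "a \<noteq> b"
    and P: "\<And>\<pi>. \<pi> \<in> perms n \<Longrightarrow> P (swap_comp a b \<pi>) = P \<pi>"
  shows "2 * card {\<pi>\<in>perms n. P \<pi> \<and> precedes \<pi> a b} = card {\<pi>\<in>perms n. P \<pi>}"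
proof -
  let ?A = "{\<pi>\<in>perms n. P \<pi> \<and> precedes \<pi> a b}"
  let ?B = "{\<pi>\<in>perms n. P \<pi> \<and> precedes \<pi> b a}"
  have swap_ab: "precedes (swap_comp a b \<pi>) a b = precedes \<pi> b a"
    and swap_ba: "precedes (swap_comp a b \<pi>) b a = precedes \<pi> a b" if "\<pi> \<in> perms n" for \<pi>
    using precedes_swap_comp[OF that] by simp_all
  have "bij_betw (swap_comp a b) ?A ?B"
    by (rule bij_betwI[where g = "swap_comp a b"])
      (use swap_comp_perms[OF ab(1,2)] P swap_ab swap_ba precedes_asym_total[OF _ ab(3)] in
        \<open>auto simp: comp_assoc[symmetric]\<close>)
  then have "card ?A = card ?B" by (rule bij_betw_same_card)
  moreover have "{\<pi>\<in>perms n. P \<pi>} = ?A \<union> ?B" "?A \<inter> ?B = {}"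
    using precedes_asym_total[OF _ ab(3)] by blast+
  moreover have "finite ?A" "finite ?B" using finite_perms by simp_all
  ultimately show ?thesis by (simp add: card_Un_disjoint)
qed

lemma sum_card_precedes:
  assumes "finite M" "\<forall>k\<in>M. fst k < n \<and> snd k < n \<and> fst k \<noteq> snd k"
  shows "2 * (\<Sum>\<pi>\<in>perms n. card {k\<in>M. precedes \<pi> (fst k) (snd k)}) = card M * fact n"
proof -
  have "(\<Sum>\<pi>\<in>perms n. card {k\<in>M. precedes \<pi> (fst k) (snd k)})
      = (\<Sum>\<pi>\<in>perms n. \<Sum>k\<in>M. if precedes \<pi> (fst k) (snd k) then 1 else 0)"
    using assms(1) by (simp add: sum.If_cases Int_def)
  also have "\<dots> = (\<Sum>k\<in>M. card {\<pi>\<in>perms n. precedes \<pi> (fst k) (snd k)})"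
    using finite_perms by (subst sum.swap) (simp add: sum.If_cases Int_def)
  finally have swap: "(\<Sum>\<pi>\<in>perms n. card {k\<in>M. precedes \<pi> (fst k) (snd k)})
      = (\<Sum>k\<in>M. card {\<pi>\<in>perms n. precedes \<pi> (fst k) (snd k)})" .
  have "2 * card {\<pi>\<in>perms n. precedes \<pi> (fst k) (snd k)} = fact n" if "k \<in> M" for k
    using card_precedes_half[of "fst k" n "snd k" "\<lambda>_. True"] assms(2) that
    by (simp add: card_perms)
  then show ?thesis unfolding swap sum_distrib_left by simp
qed

lemma card_all_precede:
  assumes "finite M" "\<forall>k\<in>M. fst k < n \<and> snd k < n \<and> fst k \<noteq> snd k"
    and "pairwise (\<lambda>k k'. disjnt {fst k, snd k} {fst k', snd k'}) M"
  shows "card {\<pi>\<in>perms n. \<forall>k\<in>M. precedes \<pi> (fst k) (snd k)} * 2 ^ card M = fact n"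
  using assms
proof (induction M rule: finite_induct)
  case empty
  then show ?case by (simp add: card_perms)
next
  case (insert k M)
  let ?P = "\<lambda>\<pi>. \<forall>k'\<in>M. precedes \<pi> (fst k') (snd k')"
  let ?A = "{\<pi>\<in>perms n. ?P \<pi> \<and> precedes \<pi> (fst k) (snd k)}"
  have k: "fst k < n" "snd k < n" "fst k \<noteq> snd k" using insert.prems(1) by auto
  have "?P (swap_comp (fst k) (snd k) \<pi>) = ?P \<pi>" if \<pi>: "\<pi> \<in> perms n" for \<pi>
  proof (intro ball_cong refl)
    fix k' assume "k' \<in> M"
    moreover from this have "k' \<noteq> k" using insert.hyps(2) by blast
    ultimately have "disjnt {fst k', snd k'} {fst k, snd k}"
      using insert.prems(2) unfolding pairwise_insert by blast
    then show "precedes (swap_comp (fst k) (snd k) \<pi>) (fst k') (snd k')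
        = precedes \<pi> (fst k') (snd k')"
      unfolding precedes_swap_comp[OF \<pi>] by (simp add: disjnt_def)
  qed
  then have half: "2 * card ?A = card {\<pi>\<in>perms n. ?P \<pi>}"
    by (rule card_precedes_half[OF k])
  have "card ?A * 2 ^ card (insert k M) = (2 * card ?A) * 2 ^ card M"
    using insert.hyps by simp
  also have "\<dots> = fact n"
    unfolding half using insert.prems by (intro insert.IH) (simp_all add: pairwise_insert)
  finally show ?case
    by (simp add: Collect_conj_eq[symmetric] conj_commute)
qed

section \<open>The expected number of bins\<close>

text \<open>Swapping the two items of one pair m exchanges whether m is in order, so the two
  permutations together gain the additive 1 of the deterministic bound back.\<close>

lemma BF_swap_pair_bound:
  assumes sizes: "sizes_above_third xs" and matching: "ls_matching xs M"
    and m: "m \<in> M" and \<pi>: "\<pi> \<in> perms (length xs)"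
  shows "BF (permute_list_by \<pi> xs) + BF (permute_list_by (swap_comp (fst m) (snd m) \<pi>) xs)
      + card {k\<in>M - {m}. precedes \<pi> (fst k) (snd k)} \<le> 2 * num_large xs + num_small xs"
proof -
  let ?\<sigma> = "swap_comp (fst m) (snd m) \<pi>"
  let ?X = "\<lambda>\<pi>. card {k\<in>M - {m}. precedes \<pi> (fst k) (snd k)}"
  note pairs = ls_matching_pairs[OF matching]
  have fin: "finite M" using matching by (simp add: ls_matching_def)
  have m_ok: "fst m < length xs" "snd m < length xs" "fst m \<noteq> snd m" using pairs(1) m by auto
  have \<sigma>: "?\<sigma> \<in> perms (length xs)" using swap_comp_perms[OF m_ok(1,2) \<pi>] .
  have split: "card {k\<in>M. precedes \<sigma> (fst k) (snd k)}
      = ?X \<sigma> + (if precedes \<sigma> (fst m) (snd m) then 1 else 0)" for \<sigma>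
  proof -
    have "{k\<in>M. precedes \<sigma> (fst k) (snd k)} = {k\<in>M - {m}. precedes \<sigma> (fst k) (snd k)}
        \<union> (if precedes \<sigma> (fst m) (snd m) then {m} else {})"
      using m by auto
    then show ?thesis using fin by (simp add: card_Un_disjoint)
  qed
  have "?X ?\<sigma> = ?X \<pi>"
  proof (intro arg_cong[where f = card] Collect_cong conj_cong refl)
    fix k assume "k \<in> M - {m}"
    then have "disjnt {fst k, snd k} {fst m, snd m}" using pairs(2) m by (auto simp: pairwise_def)
    then show "precedes ?\<sigma> (fst k) (snd k) = precedes \<pi> (fst k) (snd k)"
      by (simp add: precedes_swap_comp[OF \<pi>] disjnt_def)
  qed
  moreover have "precedes ?\<sigma> (fst m) (snd m) \<longleftrightarrow> \<not> precedes \<pi> (fst m) (snd m)"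
    using precedes_swap_comp[OF \<pi>] precedes_asym_total[OF \<pi> m_ok(3)] by simp
  ultimately show ?thesis
    using BF_precedes_bound[OF sizes matching \<pi>] BF_precedes_bound[OF sizes matching \<sigma>]
      split[of \<pi>] split[of ?\<sigma>]
    by (simp split: if_splits)
qed

lemma sum_BF_le_general:
  assumes sizes: "sizes_above_third xs" and matching: "ls_matching xs M" and m: "m \<in> M"
    and count: "2 * num_large xs + num_small xs \<le> 2 * K + card M"
    and many_bins: "4 * (card M + 1) \<le> 5 * K"
  shows "(\<Sum>\<pi>\<in>perms (length xs). real (BF (permute_list_by \<pi> xs)))
           \<le> 21/16 * real K * fact (length xs)"
proof -
  define n where "n = length xs"
  define S where "S = (\<Sum>\<pi>\<in>perms n. BF (permute_list_by \<pi> xs))"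
  define X where "X = (\<Sum>\<pi>\<in>perms n. card {k\<in>M - {m}. precedes \<pi> (fst k) (snd k)})"
  note pairs = ls_matching_pairs[OF matching]
  have m_ok: "fst m < n" "snd m < n" using pairs(1) m by (auto simp: n_def)
  have "2 * S + X \<le> fact n * (2 * num_large xs + num_small xs)"
  proof -
    have "(\<Sum>\<pi>\<in>perms n. BF (permute_list_by (swap_comp (fst m) (snd m) \<pi>) xs)) = S"
      unfolding S_def by (rule sum_swap_comp[OF m_ok])
    then have "2 * S + X = (\<Sum>\<pi>\<in>perms n. BF (permute_list_by \<pi> xs)
        + BF (permute_list_by (swap_comp (fst m) (snd m) \<pi>) xs)
        + card {k\<in>M - {m}. precedes \<pi> (fst k) (snd k)})"
      unfolding sum.distrib by (simp add: S_def X_def)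
    also have "\<dots> \<le> (\<Sum>\<pi>\<in>perms n. 2 * num_large xs + num_small xs)"
      by (intro sum_mono BF_swap_pair_bound[OF sizes matching m]) (simp add: n_def)
    finally show ?thesis by (simp add: card_perms)
  qed
  moreover have "2 * X = (card M - 1) * fact n"
    unfolding X_def using pairs(1) m matching
    by (subst sum_card_precedes) (auto simp: ls_matching_def n_def)
  moreover have "card M \<ge> 1"
    using m matching by (auto simp: ls_matching_def Suc_le_eq card_gt_0_iff)
  ultimately have "4 * S + (card M - 1) * fact n \<le> 2 * (fact n * (2 * num_large xs + num_small xs))"
    by linarith
  then have "real (4 * S + (card M - 1) * fact n)
      \<le> real (2 * (fact n * (2 * num_large xs + num_small xs)))"
    by (simp only: of_nat_le_iff)
  then have "4 * real S + (real (card M) - 1) * fact n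
      \<le> 2 * fact n * real (2 * num_large xs + num_small xs)"
    using \<open>card M \<ge> 1\<close> by (simp add: of_nat_diff)
  moreover have "fact n * real (2 * num_large xs + num_small xs) \<le> fact n * (2 * real K + card M)"
    using count by (intro mult_left_mono) (simp_all flip: of_nat_mult of_nat_add)
  moreover have "fact n * (4 * (real (card M) + 1)) \<le> fact n * (5 * real K)"
    using many_bins by (intro mult_left_mono) (simp_all flip: of_nat_mult of_nat_add)
  ultimately have "real S \<le> 21/16 * real K * fact n"
    by (simp add: algebra_simps)
  then show ?thesis by (simp add: S_def n_def)
qed

lemma sum_le_with_better_subset:
  fixes B :: "'a \<Rightarrow> nat"
  assumes "finite A" "G \<subseteq> A" "\<And>x. x \<in> A \<Longrightarrow> B x \<le> c" "\<And>x. x \<in> G \<Longrightarrow> B x + 1 \<le> c"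
  shows "sum B A + card G \<le> card A * c"
proof -
  have "sum B A + card G = (\<Sum>x\<in>A. B x + (if x \<in> G then 1 else 0))"
    using assms(1,2) by (simp add: sum.distrib sum.If_cases Int_absorb1)
  also have "\<dots> \<le> (\<Sum>x\<in>A. c)" using assms(3,4) by (intro sum_mono) auto
  finally show ?thesis by simp
qed

lemma sum_BF_one_pair:
  assumes sizes: "sizes_above_third xs" and matching: "ls_matching xs M"
    and q: "card M = 1" "num_large xs = 1" "num_small xs = 1"
  shows "(\<Sum>\<pi>\<in>perms (length xs). BF (permute_list_by \<pi> xs)) \<le> fact (length xs)"
proof -
  have "BF (permute_list_by \<pi> xs) \<le> 1" if "\<pi> \<in> perms (length xs)" for \<pi>
    using BF_bound_if_odd_small[OF sizes matching that snd_image_eq_small[OF matching]] q by simp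
  then show ?thesis
    using sum_bounded_above[of "perms (length xs)" "\<lambda>\<pi>. BF (permute_list_by \<pi> xs)" 1]
    by (simp add: card_perms)
qed

lemma sum_BF_three_pairs:
  assumes sizes: "sizes_above_third xs" and matching: "ls_matching xs M"
    and q: "card M = 3" "num_large xs = 3" "num_small xs = 3"
  shows "8 * (\<Sum>\<pi>\<in>perms (length xs). BF (permute_list_by \<pi> xs)) \<le> 31 * fact (length xs)"
proof -
  define G where "G = {\<pi>\<in>perms (length xs). \<forall>k\<in>M. precedes \<pi> (fst k) (snd k)}"
  have "card G * 8 = fact (length xs)"
    using card_all_precede[OF _ ls_matching_pairs[OF matching]] matching q(1)
    by (simp add: G_def ls_matching_def)
  moreover have "BF (permute_list_by \<pi> xs) \<le> 4" if "\<pi> \<in> perms (length xs)" for \<pi>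
    using BF_bound_if_odd_small[OF sizes matching that snd_image_eq_small[OF matching]] q by simp
  moreover have "BF (permute_list_by \<pi> xs) + 1 \<le> 4" if "\<pi> \<in> G" for \<pi>
  proof -
    have "{k\<in>M. precedes \<pi> (fst k) (snd k)} = M" using that by (auto simp: G_def)
    then show ?thesis using BF_precedes_bound[OF sizes matching, of \<pi>] that q by (simp add: G_def)
  qed
  ultimately show ?thesis
    using sum_le_with_better_subset[OF finite_perms,
        where G = G and B = "\<lambda>\<pi>. BF (permute_list_by \<pi> xs)" and c = 4]
    by (force simp: G_def card_perms)
qed

definition list_perm :: "nat list \<Rightarrow> nat \<Rightarrow> nat" where
  "list_perm ws i = (if i < length ws then ws ! i else i)"

lemma list_perm_perms:
  assumes "distinct ws" "length ws = n" "set ws \<subseteq> {..<n}"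
  shows "list_perm ws \<in> perms n"
proof -
  have "set ws = {..<n}"
    using assms by (simp add: card_subset_eq distinct_card)
  then have "bij_betw ((!) ws) {..<n} {..<n}"
    using assms(1,2) by (intro bij_betw_nth) simp_all
  then have "bij_betw (list_perm ws) {..<n} {..<n}"
    by (rule bij_betw_cong[THEN iffD1, rotated]) (simp add: list_perm_def assms(2))
  then have "list_perm ws permutes {..<n}"
    by (rule bij_imp_permutes) (simp add: list_perm_def assms(2))
  then show ?thesis by (simp add: perms_def)
qed

lemma precedes_list_perm:
  assumes "distinct ws" "length ws = n" "set ws \<subseteq> {..<n}" "i < n" "j < n"
  shows "precedes (list_perm ws) (ws ! i) (ws ! j) \<longleftrightarrow> i < j"
proof -
  have "list_perm ws permutes {..<n}" using list_perm_perms[OF assms(1-3)] by (simp add: perms_def)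
  then have "inv (list_perm ws) (ws ! k) = k" if "k < n" for k
    using permutes_inverses(2)[of "list_perm ws" "{..<n}" k] that assms(2)
    by (simp add: list_perm_def)
  then show ?thesis using assms(4,5) by (simp add: precedes_def)
qed

lemma permute_list_by_list_perm:
  "length ws = length xs \<Longrightarrow> permute_list_by (list_perm ws) xs = map ((!) xs) ws"
  by (rule nth_equalityI) (simp_all add: permute_list_by_def list_perm_def)

lemma length_bf_step_fits:
  assumes "j < length L" "L ! j + x \<le> 1"
  shows "length (bf_step L x) = length L"
proof -
  have "{j. j < length L \<and> L ! j + x \<le> 1} \<noteq> {}" using assms by auto
  then show ?thesis unfolding bf_step_def Let_def by simp
qed

lemma BF_two_fitting_pairs:
  assumes "x0 > 1/3" "x1 > 1/3" "x2 > 1/3" "x3 > 1/3" "x0 + x1 \<le> 1" "x2 + x3 \<le> 1"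
  shows "BF [x0, x1, x2, x3] = 2"
proof -
  have "bf_step [] x0 = [x0]" by (simp add: bf_step_def)
  moreover have "bf_step [x0] x1 = [x0 + x1]"
  proof -
    have "{j. j < length [x0] \<and> [x0] ! j + x1 \<le> 1} = {0}" using assms by auto
    moreover have "(LEAST j. j \<in> {0::nat} \<and> [x0] ! j = x0) = 0" by (rule Least_equality) auto
    ultimately show ?thesis unfolding bf_step_def Let_def by simp
  qed
  moreover have "bf_step [x0 + x1] x2 = [x0 + x1, x2]"
  proof -
    have "{j. j < length [x0 + x1] \<and> [x0 + x1] ! j + x2 \<le> 1} = {}" using assms by auto
    then show ?thesis unfolding bf_step_def Let_def by simp
  qed
  moreover have "length (bf_step [x0 + x1, x2] x3) = 2"
    using length_bf_step_fits[of 1 "[x0 + x1, x2]" x3] assms by simp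
  ultimately show ?thesis by (simp add: BF_def)
qed

lemma reversed_pair_first:
  assumes sizes: "sizes_above_third xs" and n: "length xs = 4"
    and ws: "distinct [b, a, c, d]" "a < 4" "b < 4" "c < 4" "d < 4"
    and fits: "xs ! a + xs ! b \<le> 1" "xs ! c + xs ! d \<le> 1"
  shows "list_perm [b, a, c, d] \<in> perms 4"
    and "BF (permute_list_by (list_perm [b, a, c, d]) xs) = 2"
    and "\<not> precedes (list_perm [b, a, c, d]) a b"
proof -
  have set: "set [b, a, c, d] \<subseteq> {..<4}" using ws(2-5) by simp
  show "list_perm [b, a, c, d] \<in> perms 4" using list_perm_perms[OF ws(1) _ set] by simp
  have "xs ! b > 1/3" "xs ! a > 1/3" "xs ! c > 1/3" "xs ! d > 1/3"
    using sizes ws(2-5) n by (auto simp: sizes_above_third_def)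
  then show "BF (permute_list_by (list_perm [b, a, c, d]) xs) = 2"
    using fits n by (simp add: permute_list_by_list_perm BF_two_fitting_pairs add.commute)
  show "\<not> precedes (list_perm [b, a, c, d]) a b"
    using precedes_list_perm[OF ws(1) _ set, of 1 0] by simp
qed

lemma two_pairs_reversed_first:
  assumes sizes: "sizes_above_third xs" and matching: "ls_matching xs M"
    and M: "M = {m1, m2}" "m1 \<noteq> m2" and n: "length xs = 4"
  obtains P where "card P = 3" "P \<subseteq> perms 4"
    "\<And>\<pi>. \<pi> \<in> P \<Longrightarrow> BF (permute_list_by \<pi> xs) = 2"
    "\<And>\<pi>. \<pi> \<in> P \<Longrightarrow> \<not> (\<forall>k\<in>M. precedes \<pi> (fst k) (snd k))"
proof -
  define a1 b1 a2 b2 where "a1 = fst m1" "b1 = snd m1" "a2 = fst m2" "b2 = snd m2"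
  note pairs = ls_matching_pairs[OF matching]
  have "disjnt {a1, b1} {a2, b2}" using pairs(2) M by (simp add: pairwise_insert a1_b1_a2_b2_def)
  then have ws: "distinct [b1, a1, a2, b2]" "distinct [b1, a1, b2, a2]" "distinct [b2, a2, a1, b1]"
    and lt: "a1 < 4" "b1 < 4" "a2 < 4" "b2 < 4"
    using pairs(1) M n by (auto simp: a1_b1_a2_b2_def)
  have fits: "xs ! a1 + xs ! b1 \<le> 1" "xs ! a2 + xs ! b2 \<le> 1" "xs ! b2 + xs ! a2 \<le> 1"
    using matching M by (auto simp: ls_matching_def a1_b1_a2_b2_def)
  define p1 p2 p3
    where "p1 = list_perm [b1, a1, a2, b2]" "p2 = list_perm [b1, a1, b2, a2]"
      "p3 = list_perm [b2, a2, a1, b1]"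
  note w1 = reversed_pair_first[OF sizes n ws(1) lt(1,2,3,4) fits(1,2), folded p1_p2_p3_def]
  note w2 = reversed_pair_first[OF sizes n ws(2) lt(1,2,4,3) fits(1,3), folded p1_p2_p3_def]
  note w3 = reversed_pair_first[OF sizes n ws(3) lt(3,4,1,2) fits(2,1), folded p1_p2_p3_def]
  have "p1 2 \<noteq> p2 2" "p1 0 \<noteq> p3 0" "p2 0 \<noteq> p3 0"
    using ws by (simp_all add: p1_p2_p3_def list_perm_def)
  then have "p1 \<noteq> p2" "p1 \<noteq> p3" "p2 \<noteq> p3" by auto
  then have "card {p1, p2, p3} = 3" by simp
  moreover have "\<not> (\<forall>k\<in>M. precedes \<pi> (fst k) (snd k))" if "\<pi> \<in> {p1, p2, p3}" for \<pi>
    using that w1(3) w2(3) w3(3) M by (auto simp: a1_b1_a2_b2_def)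
  ultimately show ?thesis
    using w1(1,2) w2(1,2) w3(1,2) by (intro that[of "{p1, p2, p3}"]) auto
qed

text \<open>Here 63 = 21/16 * 2 * 4!. Besides the 6 orders with both pairs in order, the three orders
  starting with a reversed pair need only two bins.\<close>

lemma sum_BF_two_pairs:
  assumes sizes: "sizes_above_third xs" and matching: "ls_matching xs M"
    and q: "card M = 2" "num_large xs = 2" "num_small xs = 2"
  shows "(\<Sum>\<pi>\<in>perms (length xs). BF (permute_list_by \<pi> xs)) \<le> 63"
proof -
  have n: "length xs = 4" using length_eq_num_large_num_small[of xs] q by simp
  obtain m1 m2 where M: "M = {m1, m2}" "m1 \<noteq> m2" using q(1) unfolding card_2_iff by blast
  obtain P where P: "card P = 3" "P \<subseteq> perms 4"
    "\<And>\<pi>. \<pi> \<in> P \<Longrightarrow> BF (permute_list_by \<pi> xs) = 2"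
    "\<And>\<pi>. \<pi> \<in> P \<Longrightarrow> \<not> (\<forall>k\<in>M. precedes \<pi> (fst k) (snd k))"
    using two_pairs_reversed_first[OF sizes matching M n] by blast
  define G where "G = {\<pi>\<in>perms 4. \<forall>k\<in>M. precedes \<pi> (fst k) (snd k)}"
  have "card G * 4 = 24"
    using card_all_precede[OF _ ls_matching_pairs[OF matching]] matching q(1) n
    by (simp add: G_def ls_matching_def fact_numeral)
  moreover have "G \<inter> P = {}" using P(4) by (auto simp: G_def)
  moreover have "finite G" "finite P" using finite_perms P(2) finite_subset by (auto simp: G_def)
  ultimately have card: "card (G \<union> P) = 9" using P(1) by (simp add: card_Un_disjoint)
  have "BF (permute_list_by \<pi> xs) \<le> 3" if "\<pi> \<in> perms 4" for \<pi>
    using BF_precedes_bound[OF sizes matching, of \<pi>] that q n by simp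
  moreover have "BF (permute_list_by \<pi> xs) + 1 \<le> 3" if "\<pi> \<in> G" for \<pi>
  proof -
    have "{k\<in>M. precedes \<pi> (fst k) (snd k)} = M" using that by (auto simp: G_def)
    then show ?thesis using BF_precedes_bound[OF sizes matching, of \<pi>] that q n by (simp add: G_def)
  qed
  moreover have "G \<union> P \<subseteq> perms 4" using P(2) by (auto simp: G_def)
  ultimately show ?thesis
    using sum_le_with_better_subset[OF finite_perms[of 4], where G = "G \<union> P"
        and B = "\<lambda>\<pi>. BF (permute_list_by \<pi> xs)" and c = 3] card n P(3)
    by (force simp: card_perms fact_numeral)
qed

lemma sum_BF_le_perfect_matching:
  assumes sizes: "sizes_above_third xs" and matching: "ls_matching xs M"
    and perfect: "OPT xs = card M" "num_large xs = card M" "num_small xs = card M"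
    and q: "1 \<le> card M" "card M \<le> 3"
  shows "(\<Sum>\<pi>\<in>perms (length xs). real (BF (permute_list_by \<pi> xs)))
           \<le> 21/16 * real (OPT xs) * fact (length xs)"
proof -
  define S where "S = (\<Sum>\<pi>\<in>perms (length xs). BF (permute_list_by \<pi> xs))"
  consider "card M = 1" | "card M = 2" | "card M = 3" using q by linarith
  then have "16 * S \<le> 21 * card M * fact (length xs)"
  proof cases
    case 1
    then show ?thesis using sum_BF_one_pair[OF sizes matching] perfect by (simp add: S_def)
  next
    case 2
    then show ?thesis
      using sum_BF_two_pairs[OF sizes matching] perfect length_eq_num_large_num_small[of xs]
      by (simp add: S_def fact_numeral)
  next
    case 3
    then show ?thesis using sum_BF_three_pairs[OF sizes matching] perfect by (simp add: S_def)
  qed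
  then have "real (16 * S) \<le> real (21 * card M * fact (length xs))" by (simp only: of_nat_le_iff)
  then show ?thesis using perfect by (simp add: S_def)
qed

lemma few_bins_imp_perfect:
  fixes K q l s :: nat
  assumes "2 * l + s \<le> 2 * K + q" "q \<le> l" "q \<le> s" "\<not> 4 * (q + 1) \<le> 5 * K"
  shows "K = q" "l = q" "s = q" "q \<le> 3"
proof -
  have "K \<le> q"
  proof (rule ccontr)
    assume "\<not> K \<le> q"
    with assms(4) show False by simp
  qed
  moreover have "5 * K < 4 * q + 4" using assms(4) by simp
  ultimately show "K = q" "l = q" "s = q" "q \<le> 3" using assms(1-3) by linarith+
qed

lemma sum_BF_le:
  assumes sizes: "sizes_above_third xs"
  shows "(\<Sum>\<pi>\<in>perms (length xs). real (BF (permute_list_by \<pi> xs)))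
           \<le> 21/16 * real (OPT xs) * fact (length xs)"
proof -
  obtain M where matching: "ls_matching xs M"
    and count: "2 * num_large xs + num_small xs \<le> 2 * OPT xs + card M"
    using exists_ls_matching_OPT[OF sizes] by blast
  show ?thesis
  proof (cases "M = {}")
    case True
    have "BF (permute_list_by \<pi> xs) \<le> OPT xs" if "\<pi> \<in> perms (length xs)" for \<pi>
      using BF_precedes_bound[OF sizes matching that] count True by simp
    then have "(\<Sum>\<pi>\<in>perms (length xs). real (BF (permute_list_by \<pi> xs)))
        \<le> real (card (perms (length xs))) * real (OPT xs)"
      by (intro sum_bounded_above) simp
    also have "\<dots> \<le> 21/16 * real (OPT xs) * fact (length xs)"
      by (simp add: card_perms)
    finally show ?thesis .
  next
    case False
    then obtain m where "m \<in> M" by blast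
    then have "1 \<le> card M" using matching by (auto simp: ls_matching_def Suc_le_eq card_gt_0_iff)
    show ?thesis
    proof (cases "4 * (card M + 1) \<le> 5 * OPT xs")
      case True
      with sum_BF_le_general[OF sizes matching \<open>m \<in> M\<close> count] show ?thesis by blast
    next
      case False
      note perfect = few_bins_imp_perfect[OF count ls_matching_card_le[OF matching] False]
      from sum_BF_le_perfect_matching[OF sizes matching perfect(1-3) \<open>1 \<le> card M\<close> perfect(4)]
      show ?thesis .
    qed
  qed
qed

theorem proposition2:
  fixes xs :: "real list"
  assumes "\<forall>x\<in>set xs. 1/3 < x \<and> x \<le> 1"
  shows "expected_BF_random_order xs \<le> 21/16 * real (OPT xs)"
proof -
  have "sizes_above_third xs" using assms by (simp add: sizes_above_third_def)
  moreover have "{\<sigma>. \<sigma> permutes {0..<length xs}} = perms (length xs)"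
    by (simp add: perms_def atLeast0LessThan)
  ultimately show ?thesis
    using sum_BF_le unfolding expected_BF_random_order_def
    by (simp add: card_perms divide_le_eq)
qed

end
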